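(* Let $N\ge 2$ and $K\ge 2$ be integers, let $M=N^K$, and define costs $d_m=N-1$ for $m\in[1:N]$ and $d_m=N$ for $m\in[N+1:N^K]$. Let $C=\left(1+\frac1N+\frac1{N^2}+\cdots+\frac1{N^{K-1}}\right)^{-1}$ and fix $D$ with $1\le D\le 1/C$. Let $\mathcal{F}_D$ be the set of probability vectors $P=(p_1,\dots,p_{N^K})$ (i.e. $p_m\ge 0$, $\sum_m p_m=1$) satisfying $\frac{1}{N-1}\sum_{m=1}^{N^K}p_m d_m=D$. Let $U$ be the uniform distribution on $[1:N^K]$. (i) For every order $0<\alpha<\infty$ (including $\alpha=1$), the problem of minimizing $D_\alpha(P\,\|\,U)$ over $P\in\mathcal{F}_D$ has the unique minimizer $$p_m=\begin{cases}\dfrac{1-(N-1)(D-1)}{N}, & m\in[1:N],\\[2mm] \dfrac{(N-1)(D-1)}{N^K-N}, & m\in[N+1:N^K].\end{cases}$$ (ii) For $\alpha=\infty$, a distribution $P\in\mathcal{F}_D$ minimizes $D_\infty(P\,\|\,U)$ over $\mathcal{F}_D$ if and only if $p_m=\frac{1-(N-1)(D-1)}{N}$ for all $m\in[1:N]$, and $(p_m)_{m\in[N+1:N^K]}$ is any nonnegative vector with $\sum_{m=N+1}^{N^K}p_m=(N-1)(D-1)$ and $p_m\le \frac{1-(N-1)(D-1)}{N}$ for each $m\in[N+1:N^K]$.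
   Context: Notation: $[i:j]=\{i,i+1,\dots,j\}$. For probability vectors $P=(p_1,\dots,p_M)$, $U=(u_1,\dots,u_M)$ with $u_m>0$, the Rényi divergence of order $\alpha$ (natural logarithm) is $D_\alpha(P\|U)=\frac{1}{\alpha-1}\log\sum_{m=1}^M p_m^\alpha u_m^{1-\alpha}$ for $0<\alpha<\infty$, $\alpha\neq1$; for $\alpha=1$ it is the Kullback–Leibler divergence $D_1(P\|U)=\sum_m p_m\log\frac{p_m}{u_m}$ (with $0\log 0=0$); and $D_\infty(P\|U)=\log\max_m \frac{p_m}{u_m}$. (Interpretation: the $N^K$ query options of the symmetric Tian–Sun–Chen PIR scheme with $N$ databases, $K$ messages and message length $N-1$, where the first $N$ options have download cost $N-1$ and the rest cost $N$; $D$ is the expected download cost normalized by the message length $N-1$.) *)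

theory Defs
  imports Complex_Main
begin

text \<open>Probability vectors are functions on indices 1..M (values outside are ignored
  by the divergences; the feasible set below forces them to be 0).\<close>

definition renyi_div :: "real \<Rightarrow> nat \<Rightarrow> (nat \<Rightarrow> real) \<Rightarrow> (nat \<Rightarrow> real) \<Rightarrow> real" where
  "renyi_div \<alpha> M P U =
     (if \<alpha> = 1 then (\<Sum>m\<in>{1..M}. if P m = 0 then 0 else P m * ln (P m / U m))
      else (1 / (\<alpha> - 1)) * ln (\<Sum>m\<in>{1..M}. P m powr \<alpha> * U m powr (1 - \<alpha>)))"

definition renyi_div_inf :: "nat \<Rightarrow> (nat \<Rightarrow> real) \<Rightarrow> (nat \<Rightarrow> real) \<Rightarrow> real" where
  "renyi_div_inf M P U = ln (Max ((\<lambda>m. P m / U m) ` {1..M}))"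

definition tsc_cost :: "nat \<Rightarrow> nat \<Rightarrow> real" where
  "tsc_cost N m = (if m \<le> N then real N - 1 else real N)"

definition feasible :: "nat \<Rightarrow> nat \<Rightarrow> real \<Rightarrow> (nat \<Rightarrow> real) set" where
  "feasible N K D = {P. (\<forall>m. m \<notin> {1..N^K} \<longrightarrow> P m = 0)
      \<and> (\<forall>m\<in>{1..N^K}. 0 \<le> P m)
      \<and> (\<Sum>m\<in>{1..N^K}. P m) = 1
      \<and> (1 / (real N - 1)) * (\<Sum>m\<in>{1..N^K}. P m * tsc_cost N m) = D}"

end

theory Submission
  imports Defs
begin

text \<open>Feasibility only prescribes the masses of the two blocks [1:N] and [N+1:N^K] of P,
  namely 1 - (N-1)(D-1) and (N-1)(D-1). For uniform U and finite \<alpha>, D_\<alpha>(P||U) is a strictly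
  increasing function of the sum of \<phi>_\<alpha>(p_m), where \<phi>_1(y) = y ln y and \<phi>_\<alpha>(y) = (\<alpha>-1) y^\<alpha>.
  Each \<phi>_\<alpha> lies strictly above its tangent lines, so by the tangent-line proof of Jensen's
  inequality the sum is minimised, on each block separately, exactly by the constant vector.
  For \<alpha> = \<infinity>, D_\<infinity>(P||U) = ln (N^K max_m p_m). The mass of the first block forces max_m p_m \<ge> a,
  and the hypothesis D \<le> 1/C is equivalent to b \<le> a, so the minimum ln (N^K a) is attained
  exactly when no p_m exceeds a, which in turn forces p_m = a on the first block.\<close>

lemma above_tangent_of_deriv_strict_mono:
  fixes f f' :: "real \<Rightarrow> real"
  assumes deriv: "\<And>x. 0 < x \<Longrightarrow> (f has_real_derivative f' x) (at x)"
    and mono: "strict_mono_on {0<..} f'"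
    and "0 < c" "0 < y" "y \<noteq> c"
  shows "f c + f' c * (y - c) < f y"
proof -
  obtain z where z: "min c y < z" "z < max c y" "f y - f c = (y - c) * f' z"
  proof (cases "c < y")
    case True
    with MVT2[OF True, of f f'] deriv \<open>0 < c\<close> show ?thesis
      using that by force
  next
    case False
    then have "y < c" using \<open>y \<noteq> c\<close> by simp
    with MVT2[OF this, of f f'] deriv \<open>0 < y\<close> show ?thesis
      using that by (force simp: algebra_simps)
  qed
  have "0 < (y - c) * (f' z - f' c)"
  proof (cases "c < y")
    case True
    then have "f' c < f' z" using z \<open>0 < c\<close> by (intro strict_mono_onD[OF mono]) auto
    with True show ?thesis by simp
  next
    case False
    then have "f' z < f' c" using z \<open>0 < y\<close> by (intro strict_mono_onD[OF mono]) auto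
    with False \<open>y \<noteq> c\<close> show ?thesis by (simp add: mult_neg_neg)
  qed
  with z(3) show ?thesis by (simp add: algebra_simps)
qed

text \<open>Tangents are only required at positive points: y ln y and y^\<alpha> with \<alpha> < 1 have none at 0.\<close>
definition strictly_above_tangents :: "(real \<Rightarrow> real) \<Rightarrow> bool" where
  "strictly_above_tangents f \<longleftrightarrow> (\<forall>c>0. \<exists>d. \<forall>y\<ge>0. y \<noteq> c \<longrightarrow> f c + d * (y - c) < f y)"

lemma jensen_sum_strictly_above_tangents:
  fixes x :: "'a \<Rightarrow> real" and f :: "real \<Rightarrow> real"
  assumes "finite A" "\<forall>i\<in>A. 0 \<le> x i" "sum x A = real (card A) * c" "0 \<le> c"
    and "strictly_above_tangents f"
  shows "real (card A) * f c \<le> (\<Sum>i\<in>A. f (x i))"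
    and "(\<Sum>i\<in>A. f (x i)) = real (card A) * f c \<Longrightarrow> \<forall>i\<in>A. x i = c"
proof -
  obtain d where excess: "\<forall>i\<in>A. f c + d * (x i - c) \<le> f (x i)
                            \<and> (f (x i) = f c + d * (x i - c) \<longrightarrow> x i = c)"
  proof (cases "c = 0")
    case True
    then have "\<forall>i\<in>A. x i = c" using assms sum_nonneg_eq_0_iff[of A x] by auto
    then show ?thesis using that[of 0] by simp
  next
    case False
    then obtain d where "\<forall>y\<ge>0. y \<noteq> c \<longrightarrow> f c + d * (y - c) < f y"
      using assms(5) \<open>0 \<le> c\<close> by (force simp: strictly_above_tangents_def)
    then show ?thesis using that[of d] assms(2) by force
  qed
  define g where "g i = f (x i) - f c - d * (x i - c)" for i
  have g_nonneg: "\<forall>i\<in>A. 0 \<le> g i" using excess by (auto simp: g_def)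
  have "sum g A = (\<Sum>i\<in>A. f (x i)) - real (card A) * f c - d * (sum x A - real (card A) * c)"
    by (simp add: g_def sum_subtractf sum_distrib_left[symmetric])
  then have sum_g: "sum g A = (\<Sum>i\<in>A. f (x i)) - real (card A) * f c"
    using assms(3) by simp
  show "real (card A) * f c \<le> (\<Sum>i\<in>A. f (x i))"
    using sum_nonneg[of A g] g_nonneg sum_g by simp
  assume "(\<Sum>i\<in>A. f (x i)) = real (card A) * f c"
  then have "sum g A = 0" using sum_g by simp
  then have "\<forall>i\<in>A. g i = 0" using sum_nonneg_eq_0_iff[OF \<open>finite A\<close>] g_nonneg by blast
  then show "\<forall>i\<in>A. x i = c" using excess by (force simp: g_def)
qed

lemma ex_ge_of_sum_eq_card_mult:
  fixes x :: "'a \<Rightarrow> real"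
  assumes "finite A" "A \<noteq> {}" "sum x A = real (card A) * c"
  shows "\<exists>i\<in>A. c \<le> x i"
proof (rule ccontr)
  assume "\<not> ?thesis"
  then have "sum x A < sum (\<lambda>_. c) A" using assms(1,2) by (intro sum_strict_mono) auto
  with assms(3) show False by simp
qed

lemma all_eq_of_le_of_sum_eq_card_mult:
  fixes x :: "'a \<Rightarrow> real"
  assumes "finite A" "\<forall>i\<in>A. x i \<le> c" "sum x A = real (card A) * c"
  shows "\<forall>i\<in>A. x i = c"
proof (rule ccontr)
  assume "\<not> ?thesis"
  then have "sum x A < sum (\<lambda>_. c) A"
    using assms(1,2) by (intro sum_strict_mono_ex1) (auto simp: order.strict_iff_order)
  with assms(3) show False by simp
qed

lemma x_ln_x_above_tangent:
  fixes c y :: real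
  assumes "0 < c" "0 \<le> y" "y \<noteq> c"
  shows "c * ln c + (ln c + 1) * (y - c) < (if y = 0 then 0 else y * ln y)"
proof (cases "y = 0")
  case True
  with \<open>0 < c\<close> show ?thesis by (simp add: algebra_simps)
next
  case False
  have deriv: "((\<lambda>y. y * ln y) has_real_derivative ln x + 1) (at x)" if "0 < x" for x
    using that by (auto intro!: derivative_eq_intros)
  have mono: "strict_mono_on {0<..} (\<lambda>x::real. ln x + 1)"
    by (simp add: strict_mono_on_def)
  from False above_tangent_of_deriv_strict_mono[OF deriv mono \<open>0 < c\<close>, of y] assms
  show ?thesis by simp
qed

lemma powr_above_tangent:
  fixes \<alpha> c y :: real
  assumes "0 < \<alpha>" "\<alpha> \<noteq> 1" "0 < c" "0 \<le> y" "y \<noteq> c"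
  shows "(\<alpha> - 1) * c powr \<alpha> + (\<alpha> - 1) * \<alpha> * c powr (\<alpha> - 1) * (y - c) < (\<alpha> - 1) * y powr \<alpha>"
proof (cases "y = 0")
  case True
  have "c powr (\<alpha> - 1) * c = c powr \<alpha>" using \<open>0 < c\<close> by (simp add: powr_diff)
  then have "(\<alpha> - 1) * c powr \<alpha> + (\<alpha> - 1) * \<alpha> * c powr (\<alpha> - 1) * (y - c)
      = - ((\<alpha> - 1)\<^sup>2 * c powr \<alpha>)"
    using True by (simp add: power2_eq_square algebra_simps)
  also have "\<dots> < 0" using assms by simp
  finally show ?thesis using True by simp
next
  case False
  define f' where "f' x = (\<alpha> - 1) * \<alpha> * x powr (\<alpha> - 1)" for x
  have deriv: "((\<lambda>y. (\<alpha> - 1) * y powr \<alpha>) has_real_derivative f' x) (at x)" if "0 < x" for x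
    using that unfolding f'_def by (auto intro!: derivative_eq_intros simp: powr_diff)
  have mono: "strict_mono_on {0<..} f'"
  proof (rule strict_mono_onI)
    fix x y :: real assume "x \<in> {0<..}" "y \<in> {0<..}" "x < y"
    then show "f' x < f' y"
      using assms(1,2) powr_less_mono2[of "\<alpha> - 1" x y] powr_less_mono2_neg[of "\<alpha> - 1" x y]
      by (cases "\<alpha> < 1") (auto simp: f'_def mult_less_cancel_left_neg)
  qed
  from False above_tangent_of_deriv_strict_mono[OF deriv mono \<open>0 < c\<close>, of y] assms
  show ?thesis by (simp add: f'_def)
qed

definition renyi_kernel :: "real \<Rightarrow> real \<Rightarrow> real" where
  "renyi_kernel \<alpha> y = (if \<alpha> = 1 then (if y = 0 then 0 else y * ln y) else (\<alpha> - 1) * y powr \<alpha>)"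

lemma renyi_kernel_strictly_above_tangents:
  assumes "0 < \<alpha>"
  shows "strictly_above_tangents (renyi_kernel \<alpha>)"
  unfolding strictly_above_tangents_def
proof (intro allI impI)
  fix c :: real assume "0 < c"
  show "\<exists>d. \<forall>y\<ge>0. y \<noteq> c \<longrightarrow> renyi_kernel \<alpha> c + d * (y - c) < renyi_kernel \<alpha> y"
  proof (cases "\<alpha> = 1")
    case True
    then have "renyi_kernel \<alpha> = (\<lambda>y. if y = 0 then 0 else y * ln y)"
      by (simp add: renyi_kernel_def fun_eq_iff)
    with x_ln_x_above_tangent[OF \<open>0 < c\<close>] \<open>0 < c\<close> show ?thesis
      by (intro exI[of _ "ln c + 1"]) simp
  next
    case False
    then have "renyi_kernel \<alpha> = (\<lambda>y. (\<alpha> - 1) * y powr \<alpha>)"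
      by (simp add: renyi_kernel_def fun_eq_iff)
    with powr_above_tangent[OF assms False \<open>0 < c\<close>] show ?thesis
      by (intro exI[of _ "(\<alpha> - 1) * \<alpha> * c powr (\<alpha> - 1)"]) simp
  qed
qed

lemma renyi_div_uniform_le_iff:
  assumes "0 < \<alpha>" "0 < M"
    and P: "\<forall>m\<in>{1..M}. 0 \<le> P m" "sum P {1..M} = 1"
    and Q: "\<forall>m\<in>{1..M}. 0 \<le> Q m" "sum Q {1..M} = 1"
  shows "renyi_div \<alpha> M P (\<lambda>_. 1 / real M) \<le> renyi_div \<alpha> M Q (\<lambda>_. 1 / real M)
     \<longleftrightarrow> (\<Sum>m=1..M. renyi_kernel \<alpha> (P m)) \<le> (\<Sum>m=1..M. renyi_kernel \<alpha> (Q m))"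
proof (cases "\<alpha> = 1")
  case True
  have "renyi_div \<alpha> M R (\<lambda>_. 1 / real M) = (\<Sum>m=1..M. renyi_kernel \<alpha> (R m)) + ln (real M)"
    if "\<forall>m\<in>{1..M}. 0 \<le> R m" "sum R {1..M} = 1" for R
  proof -
    have "(if R m = 0 then 0 else R m * ln (R m / (1 / real M)))
        = renyi_kernel \<alpha> (R m) + R m * ln (real M)"
      if "m \<in> {1..M}" for m
      using \<open>\<alpha> = 1\<close> \<open>0 < M\<close> \<open>\<forall>m\<in>{1..M}. 0 \<le> R m\<close> that
      by (auto simp: renyi_kernel_def ln_mult distrib_left)
    then show ?thesis
      using \<open>\<alpha> = 1\<close> \<open>sum R {1..M} = 1\<close>
      by (simp add: renyi_div_def sum.distrib sum_distrib_right[symmetric])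
  qed
  then show ?thesis using P Q by simp
next
  case False
  define k where "k = (1 / real M) powr (1 - \<alpha>)"
  define S where "S R = (\<Sum>m=1..M. R m powr \<alpha>)" for R :: "nat \<Rightarrow> real"
  have S_pos: "0 < S R" if "\<forall>m\<in>{1..M}. 0 \<le> R m" "sum R {1..M} = 1" for R
  proof (rule ccontr)
    assume "\<not> 0 < S R"
    then have "\<forall>m\<in>{1..M}. R m powr \<alpha> = 0"
      using sum_nonneg_eq_0_iff[of "{1..M}" "\<lambda>m. R m powr \<alpha>"]
      by (simp add: S_def order.antisym sum_nonneg)
    then have "sum R {1..M} = 0" by simp
    with that show False by simp
  qed
  have renyi: "renyi_div \<alpha> M R (\<lambda>_. 1 / real M) = ln (k * S R) / (\<alpha> - 1)" for R
    using False by (simp add: renyi_div_def k_def S_def sum_distrib_left mult.commute)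
  have kernel: "(\<Sum>m=1..M. renyi_kernel \<alpha> (R m)) = (\<alpha> - 1) * S R" for R
    using False by (simp add: renyi_kernel_def S_def sum_distrib_left)
  have "0 < k" using \<open>0 < M\<close> by (simp add: k_def)
  then have pos: "0 < k * S P" "0 < k * S Q" using S_pos P Q by simp_all
  show ?thesis
    unfolding renyi kernel
    using pos \<open>0 < k\<close> \<open>\<alpha> \<noteq> 1\<close>
    by (cases "1 < \<alpha>") (simp_all add: divide_le_cancel mult_le_cancel_left)
qed

lemma renyi_div_inf_uniform:
  assumes "0 < M"
  shows "renyi_div_inf M P (\<lambda>_. 1 / real M) = ln (real M * Max (P ` {1..M}))"
proof -
  have "(\<lambda>m. P m / (1 / real M)) ` {1..M} = (\<lambda>y. real M * y) ` P ` {1..M}"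
    by (auto simp: image_image mult.commute)
  moreover have "real M * Max (P ` {1..M}) = Max ((\<lambda>y. real M * y) ` P ` {1..M})"
    using assms by (intro mono_Max_commute) (auto intro: monoI)
  ultimately show ?thesis by (simp add: renyi_div_inf_def)
qed

lemma sum_split_at:
  fixes g :: "nat \<Rightarrow> 'a::comm_monoid_add"
  assumes "N \<le> M"
  shows "sum g {1..M} = sum g {1..N} + sum g {N+1..M}"
  using sum.ub_add_nat[of 1 N g "M - N"] assms by simp

definition block_const :: "nat \<Rightarrow> nat \<Rightarrow> real \<Rightarrow> real \<Rightarrow> nat \<Rightarrow> real" where
  "block_const N M a b m = (if m \<in> {1..N} then a else if m \<in> {N+1..M} then b else 0)"

definition block_mean_vectors :: "nat \<Rightarrow> nat \<Rightarrow> real \<Rightarrow> real \<Rightarrow> (nat \<Rightarrow> real) set" where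
  "block_mean_vectors N M a b = {P. (\<forall>m. m \<notin> {1..M} \<longrightarrow> P m = 0) \<and> (\<forall>m\<in>{1..M}. 0 \<le> P m)
      \<and> sum P {1..N} = real N * a \<and> sum P {N+1..M} = (real M - real N) * b}"

lemma block_const_mem_block_mean_vectors:
  assumes "N \<le> M" "0 \<le> a" "0 \<le> b"
  shows "block_const N M a b \<in> block_mean_vectors N M a b"
proof -
  have "sum (block_const N M a b) {1..N} = sum (\<lambda>_. a) {1..N}"
    by (rule sum.cong) (auto simp: block_const_def)
  moreover have "sum (block_const N M a b) {N+1..M} = sum (\<lambda>_. b) {N+1..M}"
    by (rule sum.cong) (auto simp: block_const_def)
  ultimately show ?thesis
    using assms by (auto simp: block_mean_vectors_def block_const_def of_nat_diff)
qed

lemma sum_block_mean_vectors: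
  assumes "N \<le> M" "P \<in> block_mean_vectors N M a b"
  shows "sum P {1..M} = real N * a + (real M - real N) * b"
  using assms sum_split_at[of N M P] by (simp add: block_mean_vectors_def)

lemma block_const_unique_minimizer:
  fixes f :: "real \<Rightarrow> real"
  assumes "N \<le> M" "0 \<le> a" "0 \<le> b"
    and tangent: "strictly_above_tangents f"
    and P: "P \<in> block_mean_vectors N M a b"
  shows "(\<Sum>m=1..M. f (block_const N M a b m)) \<le> (\<Sum>m=1..M. f (P m))"
    and "(\<Sum>m=1..M. f (P m)) = (\<Sum>m=1..M. f (block_const N M a b m)) \<Longrightarrow> P = block_const N M a b"
proof -
  let ?Q = "block_const N M a b"
  have nonneg: "\<forall>m\<in>{1..N}. 0 \<le> P m" "\<forall>m\<in>{N+1..M}. 0 \<le> P m"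
    using P \<open>N \<le> M\<close> by (auto simp: block_mean_vectors_def)
  have sums: "sum P {1..N} = real (card {1..N}) * a" "sum P {N+1..M} = real (card {N+1..M}) * b"
    using P \<open>N \<le> M\<close> by (auto simp: block_mean_vectors_def of_nat_diff)
  note block1 = jensen_sum_strictly_above_tangents
      [OF finite_atLeastAtMost nonneg(1) sums(1) \<open>0 \<le> a\<close> tangent]
  note block2 = jensen_sum_strictly_above_tangents
      [OF finite_atLeastAtMost nonneg(2) sums(2) \<open>0 \<le> b\<close> tangent]
  have "sum (\<lambda>m. f (?Q m)) {1..N} = sum (\<lambda>_. f a) {1..N}"
    by (rule sum.cong) (auto simp: block_const_def)
  moreover have "sum (\<lambda>m. f (?Q m)) {N+1..M} = sum (\<lambda>_. f b) {N+1..M}"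
    by (rule sum.cong) (auto simp: block_const_def)
  ultimately have sum_Q: "(\<Sum>m=1..M. f (?Q m)) = real (card {1..N}) * f a + real (card {N+1..M}) * f b"
    using sum_split_at[OF \<open>N \<le> M\<close>, of "\<lambda>m. f (?Q m)"] by simp
  have sum_P: "(\<Sum>m=1..M. f (P m)) = (\<Sum>m=1..N. f (P m)) + (\<Sum>m=N+1..M. f (P m))"
    using sum_split_at[OF \<open>N \<le> M\<close>] .
  show "(\<Sum>m=1..M. f (?Q m)) \<le> (\<Sum>m=1..M. f (P m))"
    using block1(1) block2(1) sum_P sum_Q by linarith
  assume "(\<Sum>m=1..M. f (P m)) = (\<Sum>m=1..M. f (?Q m))"
  then have "\<forall>m\<in>{1..N}. P m = a" "\<forall>m\<in>{N+1..M}. P m = b"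
    using block1 block2 sum_P sum_Q by linarith+
  moreover have "\<forall>m. m \<notin> {1..M} \<longrightarrow> P m = 0" using P by (simp add: block_mean_vectors_def)
  ultimately show "P = ?Q"
    by (auto simp: block_const_def fun_eq_iff)
qed

lemma renyi_div_unique_minimizer:
  assumes "0 < \<alpha>" "0 < M" "N \<le> M" "0 \<le> a" "0 \<le> b" "real N * a + (real M - real N) * b = 1"
    and P: "P \<in> block_mean_vectors N M a b"
  shows "(\<forall>Q\<in>block_mean_vectors N M a b.
            renyi_div \<alpha> M P (\<lambda>_. 1 / real M) \<le> renyi_div \<alpha> M Q (\<lambda>_. 1 / real M))
         \<longleftrightarrow> P = block_const N M a b"
proof -
  let ?S = "block_mean_vectors N M a b" and ?P\<^sub>0 = "block_const N M a b"
  let ?R = "\<lambda>Q. renyi_div \<alpha> M Q (\<lambda>_. 1 / real M)"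
  let ?\<Phi> = "\<lambda>Q. \<Sum>m=1..M. renyi_kernel \<alpha> (Q m)"
  have prob: "\<forall>m\<in>{1..M}. 0 \<le> Q m" "sum Q {1..M} = 1" if "Q \<in> ?S" for Q
    using that sum_block_mean_vectors[OF \<open>N \<le> M\<close> that] assms(6)
    by (simp_all add: block_mean_vectors_def)
  have R_le_iff: "?R Q \<le> ?R Q' \<longleftrightarrow> ?\<Phi> Q \<le> ?\<Phi> Q'" if "Q \<in> ?S" "Q' \<in> ?S" for Q Q'
    using renyi_div_uniform_le_iff[OF \<open>0 < \<alpha>\<close> \<open>0 < M\<close> prob[OF that(1)] prob[OF that(2)]] .
  note \<Phi>_min = block_const_unique_minimizer[OF \<open>N \<le> M\<close> \<open>0 \<le> a\<close> \<open>0 \<le> b\<close>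
      renyi_kernel_strictly_above_tangents[OF \<open>0 < \<alpha>\<close>]]
  have P\<^sub>0: "?P\<^sub>0 \<in> ?S" using block_const_mem_block_mean_vectors assms by blast
  show ?thesis
  proof
    assume "\<forall>Q\<in>?S. ?R P \<le> ?R Q"
    then have "?\<Phi> P \<le> ?\<Phi> ?P\<^sub>0" using R_le_iff P P\<^sub>0 by blast
    then show "P = ?P\<^sub>0" using \<Phi>_min[OF P] by linarith
  next
    assume "P = ?P\<^sub>0"
    then show "\<forall>Q\<in>?S. ?R P \<le> ?R Q" using R_le_iff P \<Phi>_min(1) by blast
  qed
qed

lemma block_mean_vectors_le_iff:
  assumes "N \<le> M" "P \<in> block_mean_vectors N M a b"
  shows "(\<forall>m\<in>{1..M}. P m \<le> a) \<longleftrightarrow> (\<forall>m\<in>{1..N}. P m = a) \<and> (\<forall>m\<in>{N+1..M}. 0 \<le> P m \<and> P m \<le> a)"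
proof
  assume le: "\<forall>m\<in>{1..M}. P m \<le> a"
  then have "\<forall>m\<in>{1..N}. P m = a"
    using assms by (intro all_eq_of_le_of_sum_eq_card_mult) (auto simp: block_mean_vectors_def)
  with le assms(2) show "(\<forall>m\<in>{1..N}. P m = a) \<and> (\<forall>m\<in>{N+1..M}. 0 \<le> P m \<and> P m \<le> a)"
    by (auto simp: block_mean_vectors_def)
next
  assume "(\<forall>m\<in>{1..N}. P m = a) \<and> (\<forall>m\<in>{N+1..M}. 0 \<le> P m \<and> P m \<le> a)"
  then show "\<forall>m\<in>{1..M}. P m \<le> a"
    by (auto simp: not_less_eq_eq)
qed

lemma renyi_div_inf_minimizers:
  assumes "0 < N" "N \<le> M" "0 < a" "0 \<le> b" "b \<le> a"
    and P: "P \<in> block_mean_vectors N M a b"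
  shows "(\<forall>Q\<in>block_mean_vectors N M a b.
            renyi_div_inf M P (\<lambda>_. 1 / real M) \<le> renyi_div_inf M Q (\<lambda>_. 1 / real M))
         \<longleftrightarrow> (\<forall>m\<in>{1..N}. P m = a) \<and> (\<forall>m\<in>{N+1..M}. 0 \<le> P m \<and> P m \<le> a)"
proof -
  let ?S = "block_mean_vectors N M a b"
  define mx where "mx Q = Max (Q ` {1..M})" for Q :: "nat \<Rightarrow> real"
  have "0 < M" using assms by simp
  have mx_le_iff: "mx Q \<le> a \<longleftrightarrow> (\<forall>m\<in>{1..M}. Q m \<le> a)" for Q
    using \<open>0 < M\<close> by (simp add: mx_def)
  have mx_ge: "a \<le> mx Q" if Q: "Q \<in> ?S" for Q
  proof -
    obtain m where "m \<in> {1..N}" "a \<le> Q m"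
      using ex_ge_of_sum_eq_card_mult[of "{1..N}" Q a] Q \<open>0 < N\<close>
      by (auto simp: block_mean_vectors_def)
    then show ?thesis
      using \<open>N \<le> M\<close> \<open>0 < M\<close> by (auto simp: mx_def intro!: Max_ge_iff[THEN iffD2])
  qed
  have R_le_iff: "renyi_div_inf M P (\<lambda>_. 1 / real M) \<le> renyi_div_inf M Q (\<lambda>_. 1 / real M)
      \<longleftrightarrow> mx P \<le> mx Q" if "Q \<in> ?S" for Q
    using mx_ge[OF P] mx_ge[OF that] \<open>0 < a\<close> \<open>0 < M\<close>
    by (simp add: renyi_div_inf_uniform mx_def)
  have "block_const N M a b \<in> ?S" "mx (block_const N M a b) \<le> a"
    using block_const_mem_block_mean_vectors assms mx_le_iff by (auto simp: block_const_def)
  then have "(\<forall>Q\<in>?S. renyi_div_inf M P (\<lambda>_. 1 / real M) \<le> renyi_div_inf M Q (\<lambda>_. 1 / real M))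
      \<longleftrightarrow> (\<forall>m\<in>{1..M}. P m \<le> a)"
    using R_le_iff mx_ge mx_le_iff by (meson order_trans)
  also have "\<dots> \<longleftrightarrow> (\<forall>m\<in>{1..N}. P m = a) \<and> (\<forall>m\<in>{N+1..M}. 0 \<le> P m \<and> P m \<le> a)"
    using block_mean_vectors_le_iff[OF \<open>N \<le> M\<close> P] .
  finally show ?thesis .
qed

lemma geometric_sum_inverse_powers:
  assumes "1 < N"
  shows "(real N - 1) * (\<Sum>i<K. 1 / real N ^ i) = real N - real N / real N ^ K"
proof -
  have "1 / real N \<noteq> 1" using assms by simp
  from geometric_sum[OF this, of K]
  have "(\<Sum>i<K. 1 / real N ^ i) = (1 / real N ^ K - 1) / (1 / real N - 1)"
    by (simp add: power_one_over)
  then show ?thesis using assms by (simp add: field_simps)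
qed

lemma feasible_eq_block_mean_vectors:
  assumes "2 \<le> N" "N < N ^ K"
  shows "feasible N K D = block_mean_vectors N (N ^ K)
           ((1 - (real N - 1) * (D - 1)) / real N) ((real N - 1) * (D - 1) / (real (N ^ K) - real N))"
proof -
  let ?s = "(real N - 1) * (D - 1)"
  have "N \<le> N ^ K" using assms by simp
  have cost: "(\<Sum>m=1..N^K. P m * tsc_cost N m) = (real N - 1) * sum P {1..N^K} + sum P {N+1..N^K}"
    for P :: "nat \<Rightarrow> real"
  proof -
    have "(\<Sum>m=1..N. P m * tsc_cost N m) = (real N - 1) * sum P {1..N}"
      by (auto simp: tsc_cost_def sum_distrib_left intro!: sum.cong)
    moreover have "(\<Sum>m=N+1..N^K. P m * tsc_cost N m) = real N * sum P {N+1..N^K}"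
      by (auto simp: tsc_cost_def sum_distrib_left intro!: sum.cong)
    ultimately show ?thesis
      using sum_split_at[OF \<open>N \<le> N ^ K\<close>, of P] sum_split_at[OF \<open>N \<le> N ^ K\<close>, of "\<lambda>m. P m * tsc_cost N m"]
      by (simp add: algebra_simps)
  qed
  have "0 < real N - 1" using assms by simp
  have budget: "s\<^sub>1 + s\<^sub>2 = 1 \<and> 1 / (real N - 1) * ((real N - 1) * (s\<^sub>1 + s\<^sub>2) + s\<^sub>2) = D
      \<longleftrightarrow> s\<^sub>1 = 1 - ?s \<and> s\<^sub>2 = ?s" for s\<^sub>1 s\<^sub>2 :: real
  proof -
    have "1 / (real N - 1) * ((real N - 1) * (s\<^sub>1 + s\<^sub>2) + s\<^sub>2) = s\<^sub>1 + s\<^sub>2 + s\<^sub>2 / (real N - 1)"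
      using \<open>0 < real N - 1\<close> by (simp add: field_simps)
    moreover have "s\<^sub>2 / (real N - 1) = D - 1 \<longleftrightarrow> s\<^sub>2 = ?s"
      using \<open>0 < real N - 1\<close> by (auto simp: divide_eq_eq mult.commute)
    ultimately show ?thesis by auto
  qed
  have "sum P {1..N^K} = 1 \<and> 1 / (real N - 1) * (\<Sum>m=1..N^K. P m * tsc_cost N m) = D
     \<longleftrightarrow> sum P {1..N} = 1 - ?s \<and> sum P {N+1..N^K} = ?s" for P :: "nat \<Rightarrow> real"
    unfolding cost sum_split_at[OF \<open>N \<le> N ^ K\<close>, of P] budget ..
  then show ?thesis
    using assms by (auto simp: feasible_def block_mean_vectors_def)
qed

lemma tsc_block_weights:
  fixes N K :: nat and D :: real
  defines "a \<equiv> (1 - (real N - 1) * (D - 1)) / real N"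
    and "b \<equiv> (real N - 1) * (D - 1) / (real (N ^ K) - real N)"
  assumes "2 \<le> N" "N < N ^ K" "1 \<le> D" "D \<le> (\<Sum>i<K. 1 / real N ^ i)"
  shows "0 < a" "0 \<le> b" "b \<le> a" "real N * a + (real (N ^ K) - real N) * b = 1"
proof -
  define s where "s = (real N - 1) * (D - 1)"
  have "0 \<le> s" using assms(3,5) by (simp add: s_def)
  have "s \<le> (real N - 1) * ((\<Sum>i<K. 1 / real N ^ i) - 1)"
    using assms(3,6) unfolding s_def by (intro mult_left_mono) auto
  also have "\<dots> = 1 - real N / real (N ^ K)"
    using geometric_sum_inverse_powers[of N K] assms(3) by (simp add: algebra_simps)
  finally have s_le: "s * real (N ^ K) \<le> real (N ^ K) - real N"
    using assms(3) by (simp add: field_simps)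
  have a_eq: "a = (1 - s) / real N" and b_eq: "b = s / (real (N ^ K) - real N)"
    by (simp_all add: a_def b_def s_def)
  have "s * real (N ^ K) < 1 * real (N ^ K)" using s_le assms(3) by linarith
  then have "s < 1" by (rule mult_right_less_imp_less) simp
  then show "0 < a" using assms(3) by (simp add: a_eq)
  show "0 \<le> b" using \<open>0 \<le> s\<close> assms(4) by (simp add: b_eq)
  show "b \<le> a" using s_le assms(3,4) by (simp add: a_eq b_eq field_simps)
  show "real N * a + (real (N ^ K) - real N) * b = 1"
    using assms(3,4) by (simp add: a_eq b_eq)
qed

theorem lemma1:
  fixes N K :: nat and D :: real
  defines "M \<equiv> N ^ K"
  defines "C \<equiv> 1 / (\<Sum>i<K. 1 / (real N) ^ i)"
  defines "U \<equiv> (\<lambda>m::nat. 1 / real M)"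
  defines "a \<equiv> (1 - (real N - 1) * (D - 1)) / real N"
  defines "b \<equiv> (real N - 1) * (D - 1) / (real M - real N)"
  defines "Pstar \<equiv> (\<lambda>m::nat. if m \<in> {1..N} then a else if m \<in> {N+1..M} then b else 0)"
  assumes "N \<ge> 2" and "K \<ge> 2" and "1 \<le> D" and "D \<le> 1 / C"
  shows "(\<forall>\<alpha>::real. 0 < \<alpha> \<longrightarrow>
            Pstar \<in> feasible N K D \<and>
            (\<forall>P\<in>feasible N K D.
               (\<forall>Q\<in>feasible N K D. renyi_div \<alpha> M P U \<le> renyi_div \<alpha> M Q U) \<longleftrightarrow> P = Pstar))
       \<and> (\<forall>P\<in>feasible N K D.
            (\<forall>Q\<in>feasible N K D. renyi_div_inf M P U \<le> renyi_div_inf M Q U) \<longleftrightarrow>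
            ((\<forall>m\<in>{1..N}. P m = a) \<and> (\<forall>m\<in>{N+1..M}. 0 \<le> P m \<and> P m \<le> a)
             \<and> (\<Sum>m\<in>{N+1..M}. P m) = (real N - 1) * (D - 1)))"
proof -
  have "N < M"
    using assms(7,8) power_strict_increasing_iff[of N 1 K] by (simp add: M_def)
  moreover have "D \<le> (\<Sum>i<K. 1 / real N ^ i)" using assms(10) by (simp add: C_def)
  ultimately have weights: "0 < a" "0 \<le> b" "b \<le> a" "real N * a + (real M - real N) * b = 1"
    using tsc_block_weights[of N K D] assms(7,9) by (simp_all add: M_def a_def b_def)
  have F: "feasible N K D = block_mean_vectors N M a b"
    using feasible_eq_block_mean_vectors[of N K D] assms(7) \<open>N < M\<close>
    by (simp add: M_def a_def b_def)
  have "0 < N" "0 < M" "N \<le> M" using assms(7) \<open>N < M\<close> by simp_all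
  note finite_order = renyi_div_unique_minimizer[OF _ \<open>0 < M\<close> \<open>N \<le> M\<close> _ weights(2,4)]
    and infinite_order = renyi_div_inf_minimizers[OF \<open>0 < N\<close> \<open>N \<le> M\<close> weights(1-3)]
  have block2_sum: "sum P {N+1..M} = (real N - 1) * (D - 1)" if "P \<in> block_mean_vectors N M a b" for P
    using that \<open>N < M\<close> by (simp add: block_mean_vectors_def b_def)
  have "Pstar = block_const N M a b"
    by (simp add: Pstar_def block_const_def fun_eq_iff)
  then show ?thesis
    unfolding F U_def
    using finite_order infinite_order block_const_mem_block_mean_vectors[of N M a b]
      block2_sum \<open>N \<le> M\<close> weights
    by auto
qed

end
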